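(* Let $\mathbb K$ be an infinite field, $\mathcal M,\mathcal N$ vector spaces over $\mathbb K$, and $f:\mathcal M_{\mathrm{nc}}\to\mathcal N_{\mathrm{nc}}$ a nc function which is polynomial on slices, with $f|_{\mathcal M^{n\times n}}$ polynomial on slices of degree $L_n$. Assume that the degrees $L_n$, $n=1,2,\dots$, are bounded. Then $f$ is a nc polynomial over $\mathcal M$ with coefficients in $\mathcal N$: there exist $L\in\mathbb N$ and $\ell$-linear mappings $p_\ell:\mathcal M^\ell\to\mathcal N$, $\ell=0,\dots,L$, such that $f(X)=\sum_{\ell=0}^LX^{\odot\ell}p_\ell$ for all $n$ and all $X\in\mathcal M^{n\times n}$.
   Context: $\mathcal M_{\mathrm{nc}}=\coprod_n\mathcal M^{n\times n}$; matrices over $\mathbb K$ act on matrices over $\mathcal M,\mathcal N$ by matrix multiplication. A nc function $f:\mathcal M_{\mathrm{nc}}\to\mathcal N_{\mathrm{nc}}$ satisfies $f(\mathcal M^{n\times n})\subseteq\mathcal N^{n\times n}$, $f(X\oplus Y)=f(X)\oplus f(Y)$ where $X\oplus Y=\begin{bmatrix}X&0\\0&Y\end{bmatrix}$, and $f(SXS^{-1})=Sf(X)S^{-1}$ for invertible $S\in\mathbb K^{n\times n}$. $f|_{\mathcal M^{n\times n}}$ is polynomial on slices of degree $L_n$ if for all $Y,Z\in\mathcal M^{n\times n}$, $t\mapsto f(Y+tZ)$ ($t\in\mathbb K$) is a polynomial in $t$ with coefficients in $\mathcal N^{n\times n}$ of degree at most $L_n$, with equality for some $Y,Z$; $f$ is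 polynomial on slices if this holds for every $n$ with some $L_n$. For $X=[X_{ij}]\in\mathcal M^{n\times n}$, $X^{\odot\ell}$ is the $n\times n$ matrix over $\mathcal M^{\otimes\ell}$ with $(i,k)$ entry $\sum_{j_1,\dots,j_{\ell-1}}X_{ij_1}\otimes\cdots\otimes X_{j_{\ell-1}k}$, and $X^{\odot\ell}p_\ell\in\mathcal N^{n\times n}$ applies the linear map $\mathcal M^{\otimes\ell}\to\mathcal N$ induced by $p_\ell$ entrywise; $X^{\odot0}p_0=I_np_0$ for $p_0\in\mathcal N$. *)

theory Defs
  imports Complex_Main
begin

text \<open>An n x n matrix over a type 'a is represented as a function nat => nat => 'a
  which vanishes outside the index range {..<n} x {..<n}.\<close>

definition mats :: "nat \<Rightarrow> (nat \<Rightarrow> nat \<Rightarrow> 'a::zero) set" where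
  "mats n = {X. \<forall>i j. \<not> (i < n \<and> j < n) \<longrightarrow> X i j = 0}"

definition dsum :: "nat \<Rightarrow> nat \<Rightarrow> (nat \<Rightarrow> nat \<Rightarrow> 'a::zero) \<Rightarrow> (nat \<Rightarrow> nat \<Rightarrow> 'a) \<Rightarrow> (nat \<Rightarrow> nat \<Rightarrow> 'a)" where
  "dsum n m X Y = (\<lambda>i j. if i < n \<and> j < n then X i j
      else if n \<le> i \<and> n \<le> j \<and> i < n + m \<and> j < n + m then Y (i - n) (j - n) else 0)"

definition kmul :: "nat \<Rightarrow> (nat \<Rightarrow> nat \<Rightarrow> 'k::field) \<Rightarrow> (nat \<Rightarrow> nat \<Rightarrow> 'k) \<Rightarrow> (nat \<Rightarrow> nat \<Rightarrow> 'k)" where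
  "kmul n S T = (\<lambda>i j. if i < n \<and> j < n then (\<Sum>k<n. S i k * T k j) else 0)"

definition kid :: "nat \<Rightarrow> (nat \<Rightarrow> nat \<Rightarrow> 'k::field)" where
  "kid n = (\<lambda>i j. if i < n \<and> j < n \<and> i = j then 1 else 0)"

definition inverse_pair :: "nat \<Rightarrow> (nat \<Rightarrow> nat \<Rightarrow> 'k::field) \<Rightarrow> (nat \<Rightarrow> nat \<Rightarrow> 'k) \<Rightarrow> bool" where
  "inverse_pair n S T \<longleftrightarrow> S \<in> mats n \<and> T \<in> mats n \<and> kmul n S T = kid n \<and> kmul n T S = kid n"

definition lact :: "('k::field \<Rightarrow> 'm \<Rightarrow> 'm::ab_group_add) \<Rightarrow> nat \<Rightarrow> (nat \<Rightarrow> nat \<Rightarrow> 'k) \<Rightarrow> (nat \<Rightarrow> nat \<Rightarrow> 'm) \<Rightarrow> (nat \<Rightarrow> nat \<Rightarrow> 'm)" where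
  "lact sc n S X = (\<lambda>i j. if i < n \<and> j < n then (\<Sum>k<n. sc (S i k) (X k j)) else 0)"

definition ract :: "('k::field \<Rightarrow> 'm \<Rightarrow> 'm::ab_group_add) \<Rightarrow> nat \<Rightarrow> (nat \<Rightarrow> nat \<Rightarrow> 'm) \<Rightarrow> (nat \<Rightarrow> nat \<Rightarrow> 'k) \<Rightarrow> (nat \<Rightarrow> nat \<Rightarrow> 'm)" where
  "ract sc n X S = (\<lambda>i j. if i < n \<and> j < n then (\<Sum>k<n. sc (S k j) (X i k)) else 0)"

definition nc_function ::
  "('k::field \<Rightarrow> 'm \<Rightarrow> 'm::ab_group_add) \<Rightarrow> ('k \<Rightarrow> 'n \<Rightarrow> 'n::ab_group_add)
   \<Rightarrow> (nat \<Rightarrow> (nat \<Rightarrow> nat \<Rightarrow> 'm) \<Rightarrow> (nat \<Rightarrow> nat \<Rightarrow> 'n)) \<Rightarrow> bool" where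
  "nc_function scM scN f \<longleftrightarrow>
     (\<forall>n>0. \<forall>X\<in>mats n. f n X \<in> mats n) \<and>
     (\<forall>n>0. \<forall>m>0. \<forall>X\<in>mats n. \<forall>Y\<in>mats m. f (n + m) (dsum n m X Y) = dsum n m (f n X) (f m Y)) \<and>
     (\<forall>n>0. \<forall>S T. \<forall>X\<in>mats n. inverse_pair n S T \<longrightarrow>
         f n (ract scM n (lact scM n S X) T) = ract scN n (lact scN n S (f n X)) T)"

definition slice_poly ::
  "('k::field \<Rightarrow> 'm \<Rightarrow> 'm::ab_group_add) \<Rightarrow> ('k \<Rightarrow> 'n \<Rightarrow> 'n::ab_group_add)
   \<Rightarrow> (nat \<Rightarrow> (nat \<Rightarrow> nat \<Rightarrow> 'm) \<Rightarrow> (nat \<Rightarrow> nat \<Rightarrow> 'n)) \<Rightarrow> nat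
   \<Rightarrow> (nat \<Rightarrow> nat \<Rightarrow> 'm) \<Rightarrow> (nat \<Rightarrow> nat \<Rightarrow> 'm) \<Rightarrow> nat \<Rightarrow> (nat \<Rightarrow> nat \<Rightarrow> nat \<Rightarrow> 'n) \<Rightarrow> bool" where
  "slice_poly scM scN f n Y Z L c \<longleftrightarrow>
     (\<forall>k. c k \<in> mats n) \<and>
     (\<forall>t. f n (\<lambda>i j. Y i j + scM t (Z i j)) = (\<lambda>i j. \<Sum>k\<le>L. scN (t ^ k) (c k i j)))"

text \<open>f restricted to level n is polynomial on slices of degree L: every slice is a polynomial
  of degree at most L, with equality for some slice (for L = 0 the equality clause is read as
  automatically satisfied, so that the zero polynomial has degree 0).\<close>
definition poly_on_slices_deg ::
  "('k::field \<Rightarrow> 'm \<Rightarrow> 'm::ab_group_add) \<Rightarrow> ('k \<Rightarrow> 'n \<Rightarrow> 'n::ab_group_add)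
   \<Rightarrow> (nat \<Rightarrow> (nat \<Rightarrow> nat \<Rightarrow> 'm) \<Rightarrow> (nat \<Rightarrow> nat \<Rightarrow> 'n)) \<Rightarrow> nat \<Rightarrow> nat \<Rightarrow> bool" where
  "poly_on_slices_deg scM scN f n L \<longleftrightarrow>
     (\<forall>Y\<in>mats n. \<forall>Z\<in>mats n. \<exists>c. slice_poly scM scN f n Y Z L c) \<and>
     (L = 0 \<or> (\<exists>Y\<in>mats n. \<exists>Z\<in>mats n. \<exists>c. slice_poly scM scN f n Y Z L c \<and> c L \<noteq> (\<lambda>i j. 0)))"

text \<open>An l-linear map M^l -> N, represented on lists of length l.\<close>
definition multilinear ::
  "('k::field \<Rightarrow> 'm \<Rightarrow> 'm::ab_group_add) \<Rightarrow> ('k \<Rightarrow> 'n \<Rightarrow> 'n::ab_group_add) \<Rightarrow> nat \<Rightarrow> ('m list \<Rightarrow> 'n) \<Rightarrow> bool" where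
  "multilinear scM scN l p \<longleftrightarrow>
     (\<forall>i<l. \<forall>xs. length xs = l \<longrightarrow> Vector_Spaces.linear scM scN (\<lambda>v. p (xs[i := v])))"

definition chain :: "(nat \<Rightarrow> nat \<Rightarrow> 'm) \<Rightarrow> nat list \<Rightarrow> 'm list" where
  "chain X js = map (\<lambda>t. X (js ! t) (js ! Suc t)) [0..<length js - 1]"

text \<open>X^{odot l} p: the (i,k) entry is the sum over j1..j(l-1) < n of
  p(X_{i j1}, ..., X_{j(l-1) k}); for l = 0 this gives I_n p.\<close>
definition odot :: "nat \<Rightarrow> nat \<Rightarrow> (nat \<Rightarrow> nat \<Rightarrow> 'm) \<Rightarrow> ('m list \<Rightarrow> 'n::comm_monoid_add) \<Rightarrow> (nat \<Rightarrow> nat \<Rightarrow> 'n)" where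
  "odot n l X p = (\<lambda>i k. if i < n \<and> k < n then
      (\<Sum>js\<in>{js. length js = Suc l \<and> set js \<subseteq> {..<n} \<and> hd js = i \<and> last js = k}. p (chain X js))
      else 0)"

end

theory Submission
  imports Defs
begin

text \<open>An nc function respects intertwinings: if \<open>A T = T C\<close> for a scalar matrix \<open>T\<close>, then
  \<open>f(A) T = T f(C)\<close>, since conjugation by the block shear with upper right block \<open>T\<close> fixes
  \<open>A \<oplus> C\<close>. Indexing matrices by finite sets, this applies to fibrations and embeddings of vertex
  sets and to diagonal rescalings. Rescaling along a grading, together with the degree bound \<open>B\<close>
  on slices, kills every entry of \<open>f\<close> between vertices whose grades differ by more than \<open>B\<close>.

  Let \<open>p\<^sub>l(x\<^sub>1, \<dots>, x\<^sub>l)\<close> be the \<open>(0, l)\<close> entry of \<open>f\<close> at the superdiagonal matrix with entries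
  \<open>x\<^sub>1, \<dots>, x\<^sub>l\<close>. Rescaling makes it homogeneous in each argument, and collapsing a chain whose tail
  is doubled makes it additive. Finally, given \<open>X\<close> and an index \<open>i\<close>, the tree of walks of length
  at most \<open>B\<close> from \<open>i\<close>, continued by a copy of \<open>X\<close>, collapses onto \<open>X\<close>. Hence \<open>f(X)\<^sub>i\<^sub>k\<close> is the
  sum over the walks ending at \<open>k\<close> of \<open>p\<^sub>l\<close> applied to the entries of \<open>X\<close> along the walk, plus an
  entry into the copy, which lies \<open>B + 1\<close> levels below the root and therefore vanishes.\<close>

section \<open>Block shears\<close>

lemma sum_kid_row:
  assumes "i < N" and "\<And>k. h 0 k = 0"
  shows "(\<Sum>k<N. h (kid N i k) k) = h 1 i"
proof -
  have "(\<Sum>k<N. h (kid N i k) k) = (\<Sum>k<N. if k = i then h 1 k else 0)"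
    by (rule sum.cong) (auto simp: kid_def assms)
  thus ?thesis using assms(1) by simp
qed

lemma sum_kid_col:
  assumes "j < N" and "\<And>k. h 0 k = 0"
  shows "(\<Sum>k<N. h (kid N k j) k) = h 1 j"
proof -
  have "(\<Sum>k<N. h (kid N k j) k) = (\<Sum>k<N. if k = j then h 1 k else 0)"
    by (rule sum.cong) (auto simp: kid_def assms)
  thus ?thesis using assms(1) by simp
qed

definition shear :: "nat \<Rightarrow> nat \<Rightarrow> 'k \<Rightarrow> (nat \<Rightarrow> nat \<Rightarrow> 'k) \<Rightarrow> (nat \<Rightarrow> nat \<Rightarrow> 'k::field)" where
  "shear m N c T = (\<lambda>i j. kid N i j + (if i < m \<and> m \<le> j \<and> j < N then c * T i (j - m) else 0))"

lemma shear_mats: "shear m N c T \<in> mats N"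
  by (simp add: mats_def shear_def kid_def)

lemma kmul_shear:
  "kmul N (shear m N c T) (shear m N d T) = shear m N (c + d) T"
proof (intro ext)
  fix i j
  let ?U = "\<lambda>c i j. if i < m \<and> m \<le> j \<and> j < N then c * T i (j - m) else 0"
  show "kmul N (shear m N c T) (shear m N d T) i j = shear m N (c + d) T i j"
  proof (cases "i < N \<and> j < N")
    case True
    have "kmul N (shear m N c T) (shear m N d T) i j =
      (\<Sum>k<N. kid N i k * kid N k j) + (\<Sum>k<N. kid N i k * ?U d k j)
      + (\<Sum>k<N. ?U c i k * kid N k j) + (\<Sum>k<N. ?U c i k * ?U d k j)"
      using True by (simp add: kmul_def shear_def algebra_simps sum.distrib)
    also have "(\<Sum>k<N. ?U c i k * ?U d k j) = 0"
      by (rule sum.neutral) auto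
    also have "(\<Sum>k<N. kid N i k * kid N k j) = kid N i j"
      using sum_kid_row[of i N "\<lambda>a k. a * kid N k j"] True by simp
    also have "(\<Sum>k<N. kid N i k * ?U d k j) = ?U d i j"
      using sum_kid_row[of i N "\<lambda>a k. a * ?U d k j"] True by simp
    also have "(\<Sum>k<N. ?U c i k * kid N k j) = ?U c i j"
      using sum_kid_col[of j N "\<lambda>a k. ?U c i k * a"] True by simp
    finally show ?thesis by (simp add: shear_def algebra_simps)
  qed (auto simp: kmul_def shear_def kid_def)
qed

lemma inverse_pair_shear: "inverse_pair N (shear m N 1 T) (shear m N (-1) T)"
proof -
  have "shear m N 0 T = kid N" by (simp add: shear_def fun_eq_iff)
  then show ?thesis using kmul_shear[of N m 1 T "-1"] kmul_shear[of N m "-1" T 1]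
    by (simp add: inverse_pair_def shear_mats)
qed

context vector_space
begin

lemma lact_shear:
  "lact scale N (shear m N c T) Z i j = (if i < N \<and> j < N then Z i j +
     (if i < m then (\<Sum>k\<in>{m..<N}. (c * T i (k - m)) *s Z k j) else 0) else 0)"
proof (cases "i < N \<and> j < N")
  case True
  have "lact scale N (shear m N c T) Z i j = (\<Sum>k<N. kid N i k *s Z k j) +
     (\<Sum>k<N. (if i < m \<and> m \<le> k \<and> k < N then c * T i (k - m) else 0) *s Z k j)"
    using True by (simp add: lact_def shear_def scale_left_distrib sum.distrib)
  also have "(\<Sum>k<N. kid N i k *s Z k j) = Z i j"
    using sum_kid_row[of i N "\<lambda>a k. a *s Z k j"] True by simp
  also have "(\<Sum>k<N. (if i < m \<and> m \<le> k \<and> k < N then c * T i (k - m) else 0) *s Z k j)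
     = (\<Sum>k\<in>{k\<in>{..<N}. i < m \<and> m \<le> k}. (c * T i (k - m)) *s Z k j)"
    by (simp only: sum.inter_filter[OF finite_lessThan]) (auto intro!: sum.cong)
  also have "{k\<in>{..<N}. i < m \<and> m \<le> k} = (if i < m then {m..<N} else {})"
    by auto
  finally show ?thesis using True by simp
qed (auto simp: lact_def)

lemma ract_shear:
  assumes "m \<le> N"
  shows "ract scale N Z (shear m N c T) i j = (if i < N \<and> j < N then Z i j +
     (if m \<le> j then (\<Sum>k<m. (c * T k (j - m)) *s Z i k) else 0) else 0)"
proof (cases "i < N \<and> j < N")
  case True
  have "ract scale N Z (shear m N c T) i j = (\<Sum>k<N. kid N k j *s Z i k) +
     (\<Sum>k<N. (if k < m \<and> m \<le> j \<and> j < N then c * T k (j - m) else 0) *s Z i k)"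
    using True by (simp add: ract_def shear_def scale_left_distrib sum.distrib)
  also have "(\<Sum>k<N. kid N k j *s Z i k) = Z i j"
    using sum_kid_col[of j N "\<lambda>a k. a *s Z i k"] True by simp
  also have "(\<Sum>k<N. (if k < m \<and> m \<le> j \<and> j < N then c * T k (j - m) else 0) *s Z i k)
     = (\<Sum>k\<in>{k\<in>{..<N}. k < m \<and> m \<le> j}. (c * T k (j - m)) *s Z i k)"
    using True by (simp only: sum.inter_filter[OF finite_lessThan]) (auto intro!: sum.cong)
  also have "{k\<in>{..<N}. k < m \<and> m \<le> j} = (if m \<le> j then {..<m} else {})"
    using assms by auto
  finally show ?thesis using True by simp
qed (auto simp: ract_def)

lemma shear_conj_dsum:
  assumes P: "P \<in> mats m" and Q: "Q \<in> mats m'"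
  shows "ract scale (m + m') (lact scale (m + m') (shear m (m + m') 1 T) (dsum m m' P Q))
            (shear m (m + m') (-1) T) i j
    = (if i < m + m' \<and> j < m + m' then
         (if i < m \<and> m \<le> j then (\<Sum>k<m'. T i k *s Q k (j - m)) - (\<Sum>k<m. T k (j - m) *s P i k)
          else dsum m m' P Q i j)
       else 0)"
proof -
  let ?N = "m + m'"
  let ?Z = "dsum m m' P Q"
  let ?SZ = "lact scale ?N (shear m ?N 1 T) ?Z"
  have lower: "?Z (m + k) j' = (if k < m' \<and> m \<le> j' \<and> j' < ?N then Q k (j' - m) else 0)" for k j'
    by (auto simp: dsum_def)
  have SZ: "?SZ i' j' = (if i' < ?N \<and> j' < ?N then ?Z i' j' +
     (if i' < m then (\<Sum>k<m'. T i' k *s ?Z (m + k) j') else 0) else 0)" for i' j'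
    using sum.shift_bounds_nat_ivl[of "\<lambda>k. T i' (k - m) *s ?Z k j'" 0 m m']
    by (simp add: lact_shear atLeast0LessThan add.commute del: sum.shift_bounds_nat_ivl)
  have SZ_left: "?SZ i' k = ?Z i' k" if "k < m" for i' k
  proof -
    have "(\<Sum>k'<m'. T i' k' *s ?Z (m + k') k) = 0"
      using that by (intro sum.neutral) (simp add: lower)
    then show ?thesis using that by (simp add: SZ) (simp add: dsum_def)
  qed
  show ?thesis
  proof (cases "i < ?N \<and> j < ?N \<and> m \<le> j")
    case True
    show ?thesis
    proof (cases "i < m")
      case im: True
      have "(\<Sum>k<m. (- 1 * T k (j - m)) *s ?SZ i k) = (\<Sum>k<m. - (T k (j - m) *s P i k))"
        using im by (intro sum.cong) (simp_all add: SZ_left, simp add: dsum_def)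
      also have "\<dots> = - (\<Sum>k<m. T k (j - m) *s P i k)"
        by (simp add: sum_negf)
      finally have "(\<Sum>k<m. (- 1 * T k (j - m)) *s ?SZ i k) = - (\<Sum>k<m. T k (j - m) *s P i k)" .
      then show ?thesis using im True by (simp add: ract_shear SZ lower, simp add: dsum_def)
    next
      case False
      have "(\<Sum>k<m. (- 1 * T k (j - m)) *s ?SZ i k) = 0"
        using False by (intro sum.neutral ballI) (simp add: SZ_left, simp add: dsum_def)
      then show ?thesis using False True by (simp add: ract_shear SZ)
    qed
  next
    case False
    then show ?thesis
      by (auto simp: ract_shear SZ lower intro!: sum.neutral)
  qed
qed

end

section \<open>Intertwinings\<close>

locale nc_map = M: vector_space scM + N: vector_space scN
  for scM :: "'k::field \<Rightarrow> 'm::ab_group_add \<Rightarrow> 'm" and scN :: "'k \<Rightarrow> 'n::ab_group_add \<Rightarrow> 'n" +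
  fixes f :: "nat \<Rightarrow> (nat \<Rightarrow> nat \<Rightarrow> 'm) \<Rightarrow> (nat \<Rightarrow> nat \<Rightarrow> 'n)"
  assumes nc: "nc_function scM scN f"
begin

lemma f_mats: "n > 0 \<Longrightarrow> X \<in> mats n \<Longrightarrow> f n X \<in> mats n"
  using nc by (auto simp: nc_function_def)

lemma f_dsum:
  "n > 0 \<Longrightarrow> m > 0 \<Longrightarrow> X \<in> mats n \<Longrightarrow> Y \<in> mats m \<Longrightarrow>
    f (n + m) (dsum n m X Y) = dsum n m (f n X) (f m Y)"
  using nc by (simp add: nc_function_def)

lemma f_similar:
  "n > 0 \<Longrightarrow> X \<in> mats n \<Longrightarrow> inverse_pair n S T \<Longrightarrow>
    f n (ract scM n (lact scM n S X) T) = ract scN n (lact scN n S (f n X)) T"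
  using nc by (simp add: nc_function_def)

text \<open>Conjugation by the shear with upper right block \<open>T\<close> fixes \<open>A \<oplus> C\<close>, so it also fixes
  \<open>f(A \<oplus> C) = f(A) \<oplus> f(C)\<close>, whose upper right block \<open>T f(C) - f(A) T\<close> must therefore vanish.\<close>
lemma nc_intertwine:
  assumes m: "m > 0" and m': "m' > 0" and A: "A \<in> mats m" and C: "C \<in> mats m'"
    and AC: "\<And>i j. i < m \<Longrightarrow> j < m' \<Longrightarrow>
      (\<Sum>k<m. scM (T k j) (A i k)) = (\<Sum>k<m'. scM (T i k) (C k j))"
    and i: "i < m" and j: "j < m'"
  shows "(\<Sum>k<m. scN (T k j) (f m A i k)) = (\<Sum>k<m'. scN (T i k) (f m' C k j))"
proof -
  let ?N = "m + m'"
  let ?X = "dsum m m' A C"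
  let ?conj = "\<lambda>sc Z. ract sc ?N (lact sc ?N (shear m ?N 1 T) Z) (shear m ?N (-1) T)"
  have X: "?X \<in> mats ?N" using A C by (auto simp: mats_def dsum_def)
  have fixed: "?conj scM ?X = ?X"
  proof (intro ext)
    fix i' j'
    show "?conj scM ?X i' j' = ?X i' j'"
      by (subst M.shear_conj_dsum[OF A C]) (use AC[of i' "j' - m"] in \<open>auto simp: dsum_def\<close>)
  qed
  have "f ?N (?conj scM ?X) = ?conj scN (f ?N ?X)"
    using m by (intro f_similar[OF _ X inverse_pair_shear]) simp
  then have "f ?N ?X = ?conj scN (f ?N ?X)"
    by (simp only: fixed)
  moreover have fX: "f ?N ?X = dsum m m' (f m A) (f m' C)"
    using m m' A C by (rule f_dsum)
  ultimately have "f ?N ?X i (m + j) = ?conj scN (dsum m m' (f m A) (f m' C)) i (m + j)"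
    by simp
  also have "\<dots> = (\<Sum>k<m'. scN (T i k) (f m' C k j)) - (\<Sum>k<m. scN (T k j) (f m A i k))"
    using i j by (simp add: N.shear_conj_dsum[OF f_mats[OF m A] f_mats[OF m' C]])
  finally show ?thesis
    using i fX by (simp add: dsum_def)
qed

end

section \<open>Matrices indexed by finite sets\<close>

definition enum :: "'v set \<Rightarrow> 'v \<Rightarrow> nat" where
  "enum V = (SOME e. bij_betw e V {..<card V})"

definition mat_on :: "'v set \<Rightarrow> ('v \<Rightarrow> 'v \<Rightarrow> 'a::zero) \<Rightarrow> nat \<Rightarrow> nat \<Rightarrow> 'a" where
  "mat_on V W = (\<lambda>i j. if i < card V \<and> j < card V
     then W (inv_into V (enum V) i) (inv_into V (enum V) j) else 0)"

lemma bij_betw_enum: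
  assumes "finite V" shows "bij_betw (enum V) V {..<card V}"
  unfolding enum_def using ex_bij_betw_finite_nat[OF assms] by (metis atLeast0LessThan someI_ex)

lemma enum_less: "finite V \<Longrightarrow> u \<in> V \<Longrightarrow> enum V u < card V"
  using bij_betwE[OF bij_betw_enum] by blast

lemma inv_into_enum: "finite V \<Longrightarrow> u \<in> V \<Longrightarrow> inv_into V (enum V) (enum V u) = u"
  by (simp add: bij_betw_inv_into_left[OF bij_betw_enum])

lemma enum_inv_into: "finite V \<Longrightarrow> k < card V \<Longrightarrow> enum V (inv_into V (enum V) k) = k"
  by (simp add: bij_betw_inv_into_right[OF bij_betw_enum])

lemma inv_into_enum_mem: "finite V \<Longrightarrow> k < card V \<Longrightarrow> inv_into V (enum V) k \<in> V"
  using bij_betwE[OF bij_betw_inv_into[OF bij_betw_enum]] by blast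

lemma sum_enum: "finite V \<Longrightarrow> (\<Sum>k<card V. g (inv_into V (enum V) k)) = (\<Sum>u\<in>V. g u)"
  using sum.reindex_bij_betw[OF bij_betw_inv_into[OF bij_betw_enum]] by simp

lemma mat_on_mats: "mat_on V W \<in> mats (card V)"
  by (simp add: mat_on_def mats_def)

context vector_space
begin

lemma sum_indicator_scale:
  "finite A \<Longrightarrow> (\<Sum>a\<in>A. (if P a then 1 else 0) *s g a) = (\<Sum>a\<in>{a\<in>A. P a}. g a)"
proof -
  have "(if P a then 1 else 0) *s g a = (if P a then g a else 0)" for a
    by simp
  then show "finite A \<Longrightarrow> ?thesis" by (simp add: sum.inter_filter)
qed

lemma sum_delta_scale:
  "finite A \<Longrightarrow> b \<in> A \<Longrightarrow> (\<Sum>a\<in>A. (if a = b then c a else 0) *s g a) = c b *s g b"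
proof -
  have "(if a = b then c a else 0) *s g a = (if a = b then c a *s g a else 0)" for a
    by simp
  then show "finite A \<Longrightarrow> b \<in> A \<Longrightarrow> ?thesis" by simp
qed

lemma sum_delta'_scale:
  "finite A \<Longrightarrow> b \<in> A \<Longrightarrow> (\<Sum>a\<in>A. (if b = a then c a else 0) *s g a) = c b *s g b"
  using sum_delta_scale by (simp add: eq_commute[of b])

end

context nc_map
begin

definition f_on :: "'v set \<Rightarrow> ('v \<Rightarrow> 'v \<Rightarrow> 'm) \<Rightarrow> 'v \<Rightarrow> 'v \<Rightarrow> 'n" where
  "f_on V W u v = f (card V) (mat_on V W) (enum V u) (enum V v)"

lemma f_on_intertwine:
  assumes V: "finite V" "V \<noteq> {}" and V': "finite V'" "V' \<noteq> {}"
    and WW': "\<And>u v. u \<in> V \<Longrightarrow> v \<in> V' \<Longrightarrow>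
      (\<Sum>u'\<in>V. scM (T u' v) (W u u')) = (\<Sum>v'\<in>V'. scM (T u v') (W' v' v))"
    and u: "u \<in> V" and v: "v \<in> V'"
  shows "(\<Sum>u'\<in>V. scN (T u' v) (f_on V W u u')) = (\<Sum>v'\<in>V'. scN (T u v') (f_on V' W' v' v))"
proof -
  let ?e = "enum V" and ?e' = "enum V'"
  let ?inv = "inv_into V ?e" and ?inv' = "inv_into V' ?e'"
  let ?T = "\<lambda>i j. T (?inv i) (?inv' j)"
  have "(\<Sum>k<card V. scN (?T k (?e' v)) (f (card V) (mat_on V W) (?e u) k)) =
        (\<Sum>k<card V'. scN (?T (?e u) k) (f (card V') (mat_on V' W') k (?e' v)))"
  proof (rule nc_intertwine[OF _ _ mat_on_mats mat_on_mats])
    fix i j assume i: "i < card V" and j: "j < card V'"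
    have "(\<Sum>k<card V. scM (?T k j) (mat_on V W i k)) = (\<Sum>u'\<in>V. scM (T u' (?inv' j)) (W (?inv i) u'))"
      using i by (subst sum_enum[OF V(1), symmetric]) (simp add: mat_on_def)
    also have "\<dots> = (\<Sum>v'\<in>V'. scM (T (?inv i) v') (W' v' (?inv' j)))"
      using WW' i j V V' by (simp add: inv_into_enum_mem)
    also have "\<dots> = (\<Sum>k<card V'. scM (?T i k) (mat_on V' W' k j))"
      using j by (subst sum_enum[OF V'(1), symmetric]) (simp add: mat_on_def)
    finally show "(\<Sum>k<card V. scM (?T k j) (mat_on V W i k)) =
      (\<Sum>k<card V'. scM (?T i k) (mat_on V' W' k j))" .
  qed (use u v V V' in \<open>auto simp: enum_less card_gt_0_iff\<close>)
  moreover have "(\<Sum>k<card V. scN (?T k (?e' v)) (f (card V) (mat_on V W) (?e u) k)) =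
      (\<Sum>u'\<in>V. scN (T u' v) (f_on V W u u'))"
    by (subst sum_enum[OF V(1), symmetric])
      (use u v V V' in \<open>auto simp: f_on_def inv_into_enum enum_inv_into intro!: sum.cong\<close>)
  moreover have "(\<Sum>k<card V'. scN (?T (?e u) k) (f (card V') (mat_on V' W') k (?e' v))) =
      (\<Sum>v'\<in>V'. scN (T u v') (f_on V' W' v' v))"
    by (subst sum_enum[OF V'(1), symmetric])
      (use u v V V' in \<open>auto simp: f_on_def inv_into_enum enum_inv_into intro!: sum.cong\<close>)
  ultimately show ?thesis by simp
qed

lemma f_on_lessThan:
  assumes n: "n > 0" and X: "X \<in> mats n" and i: "i < n" and j: "j < n"
  shows "f_on {..<n} X i j = f n X i j"
proof -
  let ?V = "{..<n}" and ?A = "mat_on {..<n} X"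
  let ?e = "enum ?V" and ?inv = "inv_into ?V (enum ?V)"
  let ?P = "\<lambda>k j. if ?inv k = j then 1 else 0 :: 'k"
  have "(\<Sum>k<n. scN (?P k j) (f n ?A (?e i) k)) = (\<Sum>k<n. scN (?P (?e i) k) (f n X k j))"
  proof (rule nc_intertwine[OF n n _ X])
    show "?A \<in> mats n" using mat_on_mats[of ?V X] by simp
  next
    fix i' j' assume i': "i' < n" and j': "j' < n"
    have "(\<Sum>k<n. scM (?P k j') (?A i' k)) =
        (\<Sum>u\<in>?V. scM (if u = j' then 1 else 0) (X (?inv i') u))"
      using i' by (subst sum_enum[of ?V, symmetric]) (simp_all add: mat_on_def)
    also have "\<dots> = X (?inv i') j'"
      using M.sum_delta_scale[of ?V j' "\<lambda>_. 1"] j' by simp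
    also have "\<dots> = (\<Sum>k<n. scM (?P i' k) (X k j'))"
      using M.sum_delta'_scale[of ?V "?inv i'" "\<lambda>_. 1"] inv_into_enum_mem[of ?V i'] i' by simp
    finally show "(\<Sum>k<n. scM (?P k j') (?A i' k)) = (\<Sum>k<n. scM (?P i' k) (X k j'))" .
  qed (use i j enum_less[of ?V] in auto)
  moreover have "(\<Sum>k<n. scN (?P k j) (f n ?A (?e i) k)) = f n ?A (?e i) (?e j)"
  proof -
    have "(\<Sum>k<n. scN (?P k j) (f n ?A (?e i) k)) =
        (\<Sum>u\<in>?V. scN (if u = j then 1 else 0) (f n ?A (?e i) (?e u)))"
      by (subst sum_enum[of ?V, symmetric]) (auto simp: enum_inv_into intro!: sum.cong)
    then show ?thesis
      using N.sum_delta_scale[of ?V j "\<lambda>_. 1"] j by simp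
  qed
  moreover have "(\<Sum>k<n. scN (?P (?e i) k) (f n X k j)) = f n X i j"
    using N.sum_delta'_scale[of ?V i "\<lambda>_. 1"] i by (simp add: inv_into_enum)
  ultimately show ?thesis by (simp add: f_on_def)
qed

lemma f_on_fibration:
  assumes V: "finite V" "V \<noteq> {}" and V': "finite V'" "V' \<noteq> {}"
    and \<phi>: "\<And>u. u \<in> V \<Longrightarrow> \<phi> u \<in> V'"
    and WW': "\<And>u v. u \<in> V \<Longrightarrow> v \<in> V' \<Longrightarrow> (\<Sum>u'\<in>{u'\<in>V. \<phi> u' = v}. W u u') = W' (\<phi> u) v"
    and u: "u \<in> V" and v: "v \<in> V'"
  shows "(\<Sum>u'\<in>{u'\<in>V. \<phi> u' = v}. f_on V W u u') = f_on V' W' (\<phi> u) v"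
proof -
  have "(\<Sum>u'\<in>V. scN (if \<phi> u' = v then 1 else 0) (f_on V W u u')) =
        (\<Sum>v'\<in>V'. scN (if \<phi> u = v' then 1 else 0) (f_on V' W' v' v))"
  proof (rule f_on_intertwine[OF V V' _ u v])
    fix u v assume u: "u \<in> V" and v: "v \<in> V'"
    show "(\<Sum>u'\<in>V. scM (if \<phi> u' = v then 1 else 0) (W u u')) =
          (\<Sum>v'\<in>V'. scM (if \<phi> u = v' then 1 else 0) (W' v' v))"
      using WW'[OF u v] M.sum_indicator_scale[OF V(1)] M.sum_delta'_scale[OF V'(1) \<phi>[OF u], of "\<lambda>_. 1"]
      by simp
  qed
  then show ?thesis
    using N.sum_indicator_scale[OF V(1)] N.sum_delta'_scale[OF V'(1) \<phi>[OF u], of "\<lambda>_. 1"] by simp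
qed

lemma f_on_embedding:
  assumes V: "finite V" "V \<noteq> {}" and V': "finite V'" "V' \<noteq> {}"
    and \<psi>: "\<And>v. v \<in> V' \<Longrightarrow> \<psi> v \<in> V"
    and WW': "\<And>u v. u \<in> V \<Longrightarrow> v \<in> V' \<Longrightarrow> W u (\<psi> v) = (\<Sum>v'\<in>{v'\<in>V'. \<psi> v' = u}. W' v' v)"
    and u: "u \<in> V" and v: "v \<in> V'"
  shows "f_on V W u (\<psi> v) = (\<Sum>v'\<in>{v'\<in>V'. \<psi> v' = u}. f_on V' W' v' v)"
proof -
  have "(\<Sum>u'\<in>V. scN (if u' = \<psi> v then 1 else 0) (f_on V W u u')) =
        (\<Sum>v'\<in>V'. scN (if u = \<psi> v' then 1 else 0) (f_on V' W' v' v))"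
  proof (rule f_on_intertwine[OF V V' _ u v])
    fix u v assume u: "u \<in> V" and v: "v \<in> V'"
    show "(\<Sum>u'\<in>V. scM (if u' = \<psi> v then 1 else 0) (W u u')) =
          (\<Sum>v'\<in>V'. scM (if u = \<psi> v' then 1 else 0) (W' v' v))"
      using WW'[OF u v] M.sum_indicator_scale[OF V'(1)] M.sum_delta_scale[OF V(1) \<psi>[OF v], of "\<lambda>_. 1"]
      by (simp add: eq_commute[of u])
  qed
  then show ?thesis
    using N.sum_indicator_scale[OF V'(1)] N.sum_delta_scale[OF V(1) \<psi>[OF v], of "\<lambda>_. 1"]
    by (simp add: eq_commute[of u])
qed

lemma f_on_diagonal:
  assumes V: "finite V" "V \<noteq> {}"
    and WW': "\<And>u v. u \<in> V \<Longrightarrow> v \<in> V \<Longrightarrow> scM (d v) (W u v) = scM (d u) (W' u v)"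
    and u: "u \<in> V" and v: "v \<in> V"
  shows "scN (d v) (f_on V W u v) = scN (d u) (f_on V W' u v)"
proof -
  have "(\<Sum>u'\<in>V. scN (if u' = v then d u' else 0) (f_on V W u u')) =
        (\<Sum>v'\<in>V. scN (if u = v' then d u else 0) (f_on V W' v' v))"
  proof (rule f_on_intertwine[OF V V _ u v])
    fix u v assume u: "u \<in> V" and v: "v \<in> V"
    show "(\<Sum>u'\<in>V. scM (if u' = v then d u' else 0) (W u u')) =
          (\<Sum>v'\<in>V. scM (if u = v' then d u else 0) (W' v' v))"
      using WW'[OF u v] M.sum_delta_scale[OF V(1) v, of d] M.sum_delta'_scale[OF V(1) u, of "\<lambda>_. d u"]
      by simp
  qed
  then show ?thesis
    using N.sum_delta_scale[OF V(1) v, of d] N.sum_delta'_scale[OF V(1) u, of "\<lambda>_. d u"] by simp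
qed

end

section \<open>Grade gaps beyond the slice degree\<close>

context vector_space
begin

lemma poly_diff_factor:
  "(\<Sum>k\<le>Suc d. t^k *s a k) - (\<Sum>k\<le>Suc d. t0^k *s a k) =
    (t - t0) *s (\<Sum>j\<le>d. t^j *s (\<Sum>k\<in>{Suc j..Suc d}. t0^(k - Suc j) *s a k))"
proof -
  have pow_diff: "t^k - t0^k = (t - t0) * (\<Sum>j<k. t^j * t0^(k - Suc j))" for k
  proof (cases k)
    case (Suc n) then show ?thesis using diff_power_eq_sum[of t n t0] by (simp add: Suc_diff_Suc)
  qed simp
  have "(\<Sum>k\<le>Suc d. t^k *s a k) - (\<Sum>k\<le>Suc d. t0^k *s a k) = (\<Sum>k\<le>Suc d. (t^k - t0^k) *s a k)"
    by (simp add: sum_subtractf scale_left_diff_distrib)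
  also have "\<dots> = (t - t0) *s (\<Sum>k\<le>Suc d. \<Sum>j<k. (t^j * t0^(k - Suc j)) *s a k)"
    by (simp only: pow_diff scale_scale[symmetric] scale_sum_left scale_sum_right)
  also have "(\<Sum>k\<le>Suc d. \<Sum>j<k. (t^j * t0^(k - Suc j)) *s a k) =
      (\<Sum>j\<le>d. \<Sum>k\<in>{Suc j..Suc d}. (t^j * t0^(k - Suc j)) *s a k)"
  proof -
    have "(\<Sum>k\<le>Suc d. \<Sum>j<k. (t^j * t0^(k - Suc j)) *s a k) =
        (\<Sum>k\<in>{..Suc d}. \<Sum>j\<in>{j\<in>{..d}. j < k}. (t^j * t0^(k - Suc j)) *s a k)"
      by (intro sum.cong) auto
    also have "\<dots> = (\<Sum>j\<in>{..d}. \<Sum>k\<in>{k\<in>{..Suc d}. j < k}. (t^j * t0^(k - Suc j)) *s a k)"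
      by (rule sum.swap_restrict) auto
    also have "\<dots> = (\<Sum>j\<le>d. \<Sum>k\<in>{Suc j..Suc d}. (t^j * t0^(k - Suc j)) *s a k)"
      by (intro sum.cong) auto
    finally show ?thesis .
  qed
  also have "\<dots> = (\<Sum>j\<le>d. t^j *s (\<Sum>k\<in>{Suc j..Suc d}. t0^(k - Suc j) *s a k))"
    by (simp only: scale_sum_right scale_scale)
  finally show ?thesis .
qed

text \<open>Induction on the degree, dividing by \<open>t - t0\<close> for some \<open>t0 \<notin> F\<close>.\<close>
lemma poly_vanishing_coeff_zero:
  assumes "infinite (UNIV :: 'a set)"
  shows "finite F \<Longrightarrow> (\<And>t. t \<notin> F \<Longrightarrow> (\<Sum>k\<le>d. t^k *s a k) = 0) \<Longrightarrow> k \<le> d \<Longrightarrow> a k = 0"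
proof (induction d arbitrary: a F k)
  case 0
  obtain t where "t \<notin> F" using ex_new_if_finite[OF assms 0(1)] by blast
  then show ?case using 0(2)[of t] 0(3) by simp
next
  case (Suc d)
  obtain t0 where t0: "t0 \<notin> F" using ex_new_if_finite[OF assms Suc.prems(1)] by blast
  define b where "b j = (\<Sum>k\<in>{Suc j..Suc d}. t0^(k - Suc j) *s a k)" for j
  have b: "b j = 0" if "j \<le> d" for j
  proof (rule Suc.IH[of "insert t0 F"])
    fix t assume t: "t \<notin> insert t0 F"
    then have "(t - t0) *s (\<Sum>j\<le>d. t^j *s b j) = 0"
      using poly_diff_factor[of t a d t0] Suc.prems(2)[of t] Suc.prems(2)[OF t0] by (simp add: b_def)
    then show "(\<Sum>j\<le>d. t^j *s b j) = 0" using t by simp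
  qed (use Suc.prems(1) that in auto)
  have top: "a (Suc d) = 0" using b[of d] by (simp add: b_def)
  show ?case
  proof (cases "k = Suc d")
    case False
    show ?thesis
    proof (rule Suc.IH[of F])
      fix t assume "t \<notin> F"
      then show "(\<Sum>k\<le>d. t^k *s a k) = 0" using Suc.prems(2)[of t] top by simp
    qed (use Suc.prems False in auto)
  qed (use top in simp)
qed

end

locale nc_map_bounded = nc_map scM scN f
  for scM :: "'k::field \<Rightarrow> 'm::ab_group_add \<Rightarrow> 'm" and scN :: "'k \<Rightarrow> 'n::ab_group_add \<Rightarrow> 'n" and f +
  fixes B :: nat
  assumes infinite_scalars: "infinite (UNIV :: 'k set)"
    and slices: "\<And>n Y Z. n > 0 \<Longrightarrow> Y \<in> mats n \<Longrightarrow> Z \<in> mats n \<Longrightarrow>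
      \<exists>c. \<forall>t. f n (\<lambda>i j. Y i j + scM t (Z i j)) = (\<lambda>i j. \<Sum>k\<le>B. scN (t^k) (c k i j))"
begin

lemma f_on_slices:
  assumes "finite V" "V \<noteq> {}"
  shows "\<exists>c. \<forall>t u v. f_on V (\<lambda>u v. W0 u v + scM t (W1 u v)) u v = (\<Sum>k\<le>B. scN (t^k) (c k u v))"
proof -
  have "card V > 0" using assms by (simp add: card_gt_0_iff)
  then obtain c where c: "\<And>t. f (card V) (\<lambda>i j. mat_on V W0 i j + scM t (mat_on V W1 i j)) =
      (\<lambda>i j. \<Sum>k\<le>B. scN (t^k) (c k i j))"
    using slices[OF _ mat_on_mats mat_on_mats] by blast
  have "mat_on V (\<lambda>u v. W0 u v + scM t (W1 u v)) = (\<lambda>i j. mat_on V W0 i j + scM t (mat_on V W1 i j))"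
    for t by (auto simp: mat_on_def fun_eq_iff)
  then show ?thesis
    by (intro exI[of _ "\<lambda>k u v. c k (enum V u) (enum V v)"]) (simp add: f_on_def c)
qed

text \<open>Let \<open>\<delta>\<close> grade \<open>V\<close> so that \<open>W0\<close> preserves and \<open>W1\<close> raises the grade by one. Scaling
  each vertex \<open>u\<close> by \<open>s^\<delta> u\<close> shows that the \<open>(u, v)\<close> entry of \<open>f(W0 + s W1)\<close> is
  \<open>s^(\<delta> v - \<delta> u)\<close> times that of \<open>f(W0 + W1)\<close>; as it is also a polynomial in \<open>s\<close> of degree
  at most \<open>B\<close>, it vanishes once \<open>\<delta> v > \<delta> u + B\<close>.\<close>
lemma f_on_graded_vanish:
  assumes V: "finite V" "V \<noteq> {}"
    and W0: "\<And>u v. u \<in> V \<Longrightarrow> v \<in> V \<Longrightarrow> W0 u v = 0 \<or> \<delta> u = \<delta> v"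
    and W1: "\<And>u v. u \<in> V \<Longrightarrow> v \<in> V \<Longrightarrow> W1 u v = 0 \<or> \<delta> v = Suc (\<delta> u)"
    and u: "u \<in> V" and v: "v \<in> V" and gap: "\<delta> v > \<delta> u + B"
  shows "f_on V (\<lambda>u v. W0 u v + W1 u v) u v = 0"
proof -
  let ?W = "\<lambda>t u v. W0 u v + scM t (W1 u v)"
  let ?g = "f_on V (?W 1) u v"
  define d where "d = \<delta> v - \<delta> u"
  have homogeneous: "f_on V (?W s) u v = scN (s^d) ?g" if s: "s \<noteq> 0" for s
  proof -
    have scaled: "scN (s^\<delta> v) ?g = scN (s^\<delta> u) (f_on V (?W s) u v)"
    proof (rule f_on_diagonal[OF V _ u v])
      fix u v assume "u \<in> V" "v \<in> V"
      then show "scM (s^\<delta> v) (?W 1 u v) = scM (s^\<delta> u) (?W s u v)"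
        using W0 W1 by (fastforce simp: M.scale_right_distrib M.scale_scale mult.commute)
    qed
    have "scN (s^\<delta> v) ?g = scN (s^\<delta> u) (scN (s^d) ?g)"
      using gap by (simp add: d_def flip: power_add)
    then have "scN (s^\<delta> u) (f_on V (?W s) u v) = scN (s^\<delta> u) (scN (s^d) ?g)"
      by (simp only: scaled)
    then show ?thesis using s by (simp only: N.scale_cancel_left) simp
  qed
  obtain c where c: "\<And>t. f_on V (?W t) u v = (\<Sum>k\<le>B. scN (t^k) (c k u v))"
    using f_on_slices[OF V, of W0 W1] by blast
  define a where "a k = (if k = d then - ?g else if k \<le> B then c k u v else 0)" for k
  have "B < d" using gap by (simp add: d_def)
  have "(\<Sum>k\<le>d. scN (s^k) (a k)) = 0" if s: "s \<noteq> 0" for s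
  proof -
    have "(\<Sum>k\<le>d. scN (s^k) (a k)) = (\<Sum>k\<in>insert d {..B}. scN (s^k) (a k))"
      by (rule sum.mono_neutral_right) (use \<open>B < d\<close> in \<open>auto simp: a_def\<close>)
    also have "\<dots> = f_on V (?W s) u v - scN (s^d) ?g"
      using \<open>B < d\<close> by (simp add: c a_def N.scale_minus_right)
    finally show ?thesis by (simp add: homogeneous[OF s])
  qed
  then have "a d = 0"
    using N.poly_vanishing_coeff_zero[OF infinite_scalars, where F="{0}" and d=d and a=a] by blast
  then show ?thesis by (simp add: a_def)
qed

end

section \<open>The coefficient maps\<close>

definition superdiag :: "'a list \<Rightarrow> nat \<Rightarrow> nat \<Rightarrow> 'a::zero" where
  "superdiag xs i j = (if i < length xs \<and> j = Suc i then xs ! i else 0)"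

lemma superdiag_mats: "superdiag xs \<in> mats (Suc (length xs))"
  by (auto simp: superdiag_def mats_def)

context nc_map
begin

text \<open>In the expansion of \<open>f\<close> at the superdiagonal matrix with entries \<open>x\<^sub>1, \<dots>, x\<^sub>l\<close>, only the
  \<open>l\<close>-th term contributes to the \<open>(0, l)\<close> entry, and it contributes \<open>p\<^sub>l(x\<^sub>1, \<dots>, x\<^sub>l)\<close>.\<close>
definition nc_coeff :: "nat \<Rightarrow> 'm list \<Rightarrow> 'n" where
  "nc_coeff l xs = f (Suc l) (superdiag xs) 0 l"

lemma f_on_superdiag:
  "length xs = l \<Longrightarrow> a \<le> l \<Longrightarrow> b \<le> l \<Longrightarrow>
    f_on {..<Suc l} (superdiag xs) a b = f (Suc l) (superdiag xs) a b"
  using f_on_lessThan[OF _ superdiag_mats, of xs a b] by simp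

lemma nc_coeff_scale:
  assumes l: "length xs = l" and i: "i < l"
  shows "nc_coeff l (xs[i := scM c x]) = scN c (nc_coeff l (xs[i := x]))"
proof -
  let ?d = "\<lambda>t. if t \<le> i then 1 else c"
  have "scN (?d l) (f_on {..<Suc l} (superdiag (xs[i := x])) 0 l) =
      scN (?d 0) (f_on {..<Suc l} (superdiag (xs[i := scM c x])) 0 l)"
  proof (rule f_on_diagonal)
    fix u v assume "u \<in> {..<Suc l}" "v \<in> {..<Suc l}"
    then show "scM (?d v) (superdiag (xs[i := x]) u v) = scM (?d u) (superdiag (xs[i := scM c x]) u v)"
      using l i by (cases "u = i") (auto simp: superdiag_def nth_list_update)
  qed auto
  then show ?thesis using i l by (simp add: f_on_superdiag nc_coeff_def)
qed

end

text \<open>The chain \<open>0 \<rightarrow> 1 \<rightarrow> \<dots> \<rightarrow> l\<close> labelled by \<open>xs\<close>, with the part after vertex \<open>i\<close> doubled: the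
  edge leaving \<open>i\<close> is labelled \<open>x\<close> in the copy \<open>True\<close> and \<open>y\<close> in the copy \<open>False\<close>.
  Collapsing the two copies gives the chain with \<open>x + y\<close> at position \<open>i\<close>.\<close>
definition fork_vertices :: "nat \<Rightarrow> nat \<Rightarrow> (nat + nat \<times> bool) set" where
  "fork_vertices i l = Inl ` {..i} \<union> Inr ` ({Suc i..l} \<times> UNIV)"

fun fork_mat :: "nat \<Rightarrow> nat \<Rightarrow> 'a list \<Rightarrow> 'a \<Rightarrow> 'a \<Rightarrow> nat + nat \<times> bool \<Rightarrow> nat + nat \<times> bool \<Rightarrow> 'a::zero"
  where
    "fork_mat i l xs x y (Inl a) (Inl b) = (if b = Suc a \<and> b \<le> i then xs ! a else 0)"
  | "fork_mat i l xs x y (Inl a) (Inr (b, \<beta>)) = (if a = i \<and> b = Suc i then (if \<beta> then x else y) else 0)"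
  | "fork_mat i l xs x y (Inr _) (Inl _) = 0"
  | "fork_mat i l xs x y (Inr (a, \<alpha>)) (Inr (b, \<beta>)) = (if \<alpha> = \<beta> \<and> b = Suc a \<and> b \<le> l then xs ! a else 0)"

fun fork_proj :: "nat + nat \<times> bool \<Rightarrow> nat" where
  "fork_proj (Inl a) = a"
| "fork_proj (Inr (a, _)) = a"

definition fork_branch :: "nat \<Rightarrow> bool \<Rightarrow> nat \<Rightarrow> nat + nat \<times> bool" where
  "fork_branch i \<beta> t = (if t \<le> i then Inl t else Inr (t, \<beta>))"

lemma mem_fork_vertices:
  "u \<in> fork_vertices i l \<longleftrightarrow> (\<exists>a. u = Inl a \<and> a \<le> i) \<or> (\<exists>a \<alpha>. u = Inr (a, \<alpha>) \<and> Suc i \<le> a \<and> a \<le> l)"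
  by (auto simp: fork_vertices_def)

lemma fork_vertices_finite: "finite (fork_vertices i l)"
  by (simp add: fork_vertices_def)

lemma fork_vertices_nonempty: "fork_vertices i l \<noteq> {}"
  by (simp add: fork_vertices_def)

lemma fork_proj_fibre:
  "v \<le> l \<Longrightarrow> {u \<in> fork_vertices i l. fork_proj u = v} =
    (if v \<le> i then {Inl v} else {Inr (v, True), Inr (v, False)})"
  by (rule set_eqI, case_tac x) (auto simp: mem_fork_vertices)

context nc_map
begin

lemma f_on_fork_collapse:
  assumes l: "length xs = l" and i: "i < l"
  shows "f_on (fork_vertices i l) (fork_mat i l xs x y) (Inl 0) (Inr (l, True)) +
      f_on (fork_vertices i l) (fork_mat i l xs x y) (Inl 0) (Inr (l, False)) =
    nc_coeff l (xs[i := x + y])"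
proof -
  have "(\<Sum>u\<in>{u \<in> fork_vertices i l. fork_proj u = l}. f_on (fork_vertices i l) (fork_mat i l xs x y) (Inl 0) u) =
      f_on {..<Suc l} (superdiag (xs[i := x + y])) (fork_proj (Inl 0)) l"
  proof (rule f_on_fibration)
    fix u v assume u: "u \<in> fork_vertices i l" and v: "v \<in> {..<Suc l}"
    then have "v \<le> l" by simp
    show "(\<Sum>u'\<in>{u' \<in> fork_vertices i l. fork_proj u' = v}. fork_mat i l xs x y u u') =
        superdiag (xs[i := x + y]) (fork_proj u) v"
      unfolding fork_proj_fibre[OF \<open>v \<le> l\<close>] using u l i
      by (cases "v \<le> i") (auto simp: mem_fork_vertices superdiag_def nth_list_update)
  qed (use i in \<open>auto simp: fork_vertices_finite fork_vertices_nonempty mem_fork_vertices\<close>)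
  then show ?thesis
    using i l by (simp add: fork_proj_fibre f_on_superdiag nc_coeff_def)
qed

lemma f_on_fork_branch:
  assumes l: "length xs = l" and i: "i < l"
  shows "f_on (fork_vertices i l) (fork_mat i l xs x y) (Inl 0) (Inr (l, \<beta>)) =
    nc_coeff l (xs[i := if \<beta> then x else y])"
proof -
  let ?\<psi> = "fork_branch i \<beta>"
  have "f_on (fork_vertices i l) (fork_mat i l xs x y) (?\<psi> 0) (?\<psi> l) =
      (\<Sum>t\<in>{t \<in> {..<Suc l}. ?\<psi> t = ?\<psi> 0}. f_on {..<Suc l} (superdiag (xs[i := if \<beta> then x else y])) t l)"
  proof (rule f_on_embedding)
    fix u v assume u: "u \<in> fork_vertices i l" and v: "v \<in> {..<Suc l}"
    have fibre: "{t \<in> {..<Suc l}. ?\<psi> t = u} =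
        (case u of Inl a \<Rightarrow> {a} | Inr (a, \<alpha>) \<Rightarrow> if \<alpha> = \<beta> then {a} else {})"
      using u i by (auto simp: mem_fork_vertices fork_branch_def split: if_splits)
    show "fork_mat i l xs x y u (?\<psi> v) =
        (\<Sum>t\<in>{t \<in> {..<Suc l}. ?\<psi> t = u}. superdiag (xs[i := if \<beta> then x else y]) t v)"
      unfolding fibre using u v l i
      by (auto simp: mem_fork_vertices fork_branch_def superdiag_def nth_list_update)
  qed (use i in \<open>auto simp: fork_vertices_finite fork_vertices_nonempty mem_fork_vertices fork_branch_def\<close>)
  moreover have "{t \<in> {..<Suc l}. ?\<psi> t = ?\<psi> 0} = {0}"
    by (auto simp: fork_branch_def)
  ultimately show ?thesis
    using i l by (simp add: fork_branch_def f_on_superdiag nc_coeff_def)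
qed

lemma nc_coeff_add:
  "length xs = l \<Longrightarrow> i < l \<Longrightarrow>
    nc_coeff l (xs[i := x + y]) = nc_coeff l (xs[i := x]) + nc_coeff l (xs[i := y])"
  using f_on_fork_collapse[of xs l i x y] f_on_fork_branch[of xs l i x y True] f_on_fork_branch[of xs l i x y False]
  by simp

lemma nc_coeff_multilinear: "multilinear scM scN l (nc_coeff l)"
  unfolding multilinear_def Vector_Spaces.linear_def module_hom_iff module_iff_vector_space
  using nc_coeff_add nc_coeff_scale M.vector_space_axioms N.vector_space_axioms by auto

end

section \<open>The tree of walks\<close>

text \<open>The walks of length at most \<open>B\<close> in \<open>{..<n}\<close> starting at \<open>i0\<close> form a tree, whose edges extend
  a walk by one step and are labelled by the corresponding entry of \<open>X\<close>; walks of full length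
  continue into a copy \<open>Inr ` {..<n}\<close> of the index set carrying \<open>X\<close> itself. Sending each vertex to
  its endpoint collapses the whole graph onto \<open>X\<close>.\<close>
definition walks :: "nat \<Rightarrow> nat \<Rightarrow> nat \<Rightarrow> nat list set" where
  "walks n B i0 = {js. js \<noteq> [] \<and> hd js = i0 \<and> set js \<subseteq> {..<n} \<and> length js \<le> Suc B}"

definition tree_vertices :: "nat \<Rightarrow> nat \<Rightarrow> nat \<Rightarrow> (nat list + nat) set" where
  "tree_vertices n B i0 = Inl ` walks n B i0 \<union> Inr ` {..<n}"

fun tree_copy :: "(nat \<Rightarrow> nat \<Rightarrow> 'a) \<Rightarrow> nat list + nat \<Rightarrow> nat list + nat \<Rightarrow> 'a::zero" where
  "tree_copy X (Inr a) (Inr b) = X a b"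
| "tree_copy X _ _ = 0"

fun tree_steps :: "nat \<Rightarrow> (nat \<Rightarrow> nat \<Rightarrow> 'a) \<Rightarrow> nat list + nat \<Rightarrow> nat list + nat \<Rightarrow> 'a::zero" where
  "tree_steps B X (Inl js) (Inl js') = (if butlast js' = js then X (last js) (last js') else 0)"
| "tree_steps B X (Inl js) (Inr b) = (if length js = Suc B then X (last js) b else 0)"
| "tree_steps B X (Inr _) _ = 0"

definition tree_mat :: "nat \<Rightarrow> (nat \<Rightarrow> nat \<Rightarrow> 'a) \<Rightarrow> nat list + nat \<Rightarrow> nat list + nat \<Rightarrow> 'a::monoid_add" where
  "tree_mat B X = (\<lambda>u v. tree_copy X u v + tree_steps B X u v)"

fun tree_proj :: "nat list + nat \<Rightarrow> nat" where
  "tree_proj (Inl js) = last js"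
| "tree_proj (Inr b) = b"

fun tree_level :: "nat \<Rightarrow> nat list + nat \<Rightarrow> nat" where
  "tree_level B (Inl js) = length js - 1"
| "tree_level B (Inr _) = Suc B"

lemma walks_finite: "finite (walks n B i0)"
proof (rule finite_subset)
  show "walks n B i0 \<subseteq> {js. set js \<subseteq> {..<n} \<and> length js \<le> Suc B}"
    by (auto simp: walks_def)
qed (rule finite_lists_length_le, simp)

lemma tree_vertices_finite: "finite (tree_vertices n B i0)"
  by (simp add: tree_vertices_def walks_finite)

lemma singleton_walk: "i0 < n \<Longrightarrow> [i0] \<in> walks n B i0"
  by (simp add: walks_def)

lemma tree_vertices_nonempty: "i0 < n \<Longrightarrow> tree_vertices n B i0 \<noteq> {}"
  by (auto simp: tree_vertices_def)

lemma mem_tree_vertices: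
  "u \<in> tree_vertices n B i0 \<longleftrightarrow> (\<exists>js. u = Inl js \<and> js \<in> walks n B i0) \<or> (\<exists>b. u = Inr b \<and> b < n)"
  by (auto simp: tree_vertices_def)

lemma tree_proj_fibre:
  "{u \<in> tree_vertices n B i0. tree_proj u = v} =
    Inl ` {js \<in> walks n B i0. last js = v} \<union> (if v < n then {Inr v} else {})"
  by (rule set_eqI, case_tac x) (auto simp: mem_tree_vertices)

lemma sum_tree_proj_fibre:
  assumes "v < n"
  shows "(\<Sum>u\<in>{u \<in> tree_vertices n B i0. tree_proj u = v}. g u) =
    (\<Sum>js\<in>{js \<in> walks n B i0. last js = v}. g (Inl js)) + g (Inr v)"
proof -
  have "finite {js \<in> walks n B i0. last js = v}" using walks_finite by simp
  then show ?thesis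
    using assms by (simp add: tree_proj_fibre sum.insert[OF finite_imageI] sum.reindex add.commute image_iff)
qed

lemma walks_extending:
  assumes "js \<in> walks n B i0" and "v < n"
  shows "{js' \<in> walks n B i0. last js' = v \<and> butlast js' = js} =
    (if length js \<le> B then {js @ [v]} else {})"
proof -
  have "js' = js @ [v]" if "js' \<in> walks n B i0" "last js' = v" "butlast js' = js" for js'
    using that append_butlast_last_id[of js'] by (auto simp: walks_def)
  then show ?thesis using assms by (auto simp: walks_def)
qed

lemma tree_fibre_sum:
  assumes u: "u \<in> tree_vertices n B i0" and v: "v < n"
  shows "(\<Sum>u'\<in>{u' \<in> tree_vertices n B i0. tree_proj u' = v}. tree_mat B X u u') = X (tree_proj u) v"
proof -
  let ?S = "{js \<in> walks n B i0. last js = v}"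
  have "(\<Sum>u'\<in>{u' \<in> tree_vertices n B i0. tree_proj u' = v}. tree_mat B X u u') =
      (\<Sum>js\<in>?S. tree_mat B X u (Inl js)) + tree_mat B X u (Inr v)"
    using v by (rule sum_tree_proj_fibre)
  also have "\<dots> = X (tree_proj u) v"
  proof (cases u)
    case (Inl js)
    then have js: "js \<in> walks n B i0" using u by (simp add: mem_tree_vertices)
    have "(\<Sum>js'\<in>?S. tree_mat B X u (Inl js')) = (\<Sum>js'\<in>?S. if butlast js' = js then X (last js) v else 0)"
      using Inl by (intro sum.cong) (auto simp: tree_mat_def)
    also have "\<dots> = (\<Sum>js'\<in>{js' \<in> walks n B i0. last js' = v \<and> butlast js' = js}. X (last js) v)"
      using walks_finite by (simp add: sum.inter_filter if_if_eq_conj)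
    also have "\<dots> = (if length js \<le> B then X (last js) v else 0)"
      by (simp add: walks_extending[OF js v])
    finally show ?thesis
      using Inl js by (auto simp: walks_def tree_mat_def)
  qed (simp add: tree_mat_def sum.neutral)
  finally show ?thesis .
qed

lemma length_chain: "length (chain X js) = length js - 1"
  by (simp add: chain_def)

lemma nth_chain: "t < length js - 1 \<Longrightarrow> chain X js ! t = X (js ! t) (js ! Suc t)"
  by (simp add: chain_def)

lemma prefix_walk: "js \<in> walks n B i0 \<Longrightarrow> take (Suc t) js \<in> walks n B i0"
  by (auto simp: walks_def hd_take dest: in_set_takeD)

lemma tree_mat_prefix:
  assumes js: "js \<in> walks n B i0" "length js = Suc l"
    and u: "u \<in> tree_vertices n B i0" and t: "t \<le> l"
  shows "tree_mat B X u (Inl (take (Suc t) js)) =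
    (\<Sum>t'\<in>{t' \<in> {..<Suc l}. Inl (take (Suc t') js) = u}. superdiag (chain X js) t' t)"
proof (cases u)
  case (Inl js0)
  let ?e = "if 0 < t \<and> take t js = js0 then X (js ! (t - 1)) (js ! t) else 0"
  have "(\<Sum>t'\<in>{t' \<in> {..<Suc l}. Inl (take (Suc t') js) = u}. superdiag (chain X js) t' t) =
      (\<Sum>t'<Suc l. if take (Suc t') js = js0 then superdiag (chain X js) t' t else 0)"
    by (simp only: Inl sum.inter_filter[OF finite_lessThan] sum.inject)
  also have "\<dots> = (\<Sum>t'<Suc l. if t' = t - 1 then ?e else 0)"
    by (rule sum.cong[OF refl]) (use js t in \<open>auto simp: superdiag_def length_chain nth_chain\<close>)
  also have "\<dots> = ?e"
    using t by (cases t) auto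
  also have "?e = tree_mat B X u (Inl (take (Suc t) js))"
  proof (cases t)
    case 0
    moreover have "butlast (take (Suc 0) js) = []" by (cases js) auto
    moreover have "js0 \<noteq> []" using u Inl by (auto simp: mem_tree_vertices walks_def)
    ultimately show ?thesis using Inl by (simp add: tree_mat_def)
  next
    case (Suc s)
    then have "s < length js" "t < length js" using js t by auto
    moreover have "butlast (take (Suc t) js) = take t js"
      using \<open>t < length js\<close> by (simp add: butlast_take)
    moreover have "last (take (Suc t) js) = js ! t" "last (take t js) = js ! s"
      using Suc \<open>s < length js\<close> \<open>t < length js\<close> by (simp_all add: take_Suc_conv_app_nth)
    ultimately show ?thesis using Inl Suc by (auto simp: tree_mat_def)
  qed
  finally show ?thesis ..
qed (simp add: tree_mat_def)

context nc_map
begin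

lemma f_on_tree_walk:
  assumes i0: "i0 < n" and js: "js \<in> walks n B i0"
  shows "f_on (tree_vertices n B i0) (tree_mat B X) (Inl [i0]) (Inl js) = nc_coeff (length js - 1) (chain X js)"
proof -
  define l where "l = length js - 1"
  have len: "length js = Suc l" and hd: "hd js = i0" using js by (auto simp: l_def walks_def)
  let ?\<psi> = "\<lambda>t. Inl (take (Suc t) js) :: nat list + nat"
  have "f_on (tree_vertices n B i0) (tree_mat B X) (?\<psi> 0) (?\<psi> l) =
    (\<Sum>t\<in>{t \<in> {..<Suc l}. ?\<psi> t = ?\<psi> 0}. f_on {..<Suc l} (superdiag (chain X js)) t l)"
  proof (rule f_on_embedding)
    fix u t assume "u \<in> tree_vertices n B i0" "t \<in> {..<Suc l}"
    then show "tree_mat B X u (?\<psi> t) =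
        (\<Sum>t'\<in>{t' \<in> {..<Suc l}. ?\<psi> t' = u}. superdiag (chain X js) t' t)"
      using tree_mat_prefix[OF js len] by (simp add: less_Suc_eq_le)
  qed (use i0 prefix_walk[OF js] in \<open>simp_all add: tree_vertices_finite tree_vertices_nonempty mem_tree_vertices lessThan_empty_iff\<close>)
  moreover have "{t \<in> {..<Suc l}. ?\<psi> t = ?\<psi> 0} = {0}"
  proof -
    have "t = 0" if "t < Suc l" "take (Suc t) js = take (Suc 0) js" for t
      using arg_cong[OF that(2), of length] that(1) len by simp
    then show ?thesis by auto
  qed
  moreover have "take (Suc 0) js = [i0]" using len hd by (cases js) auto
  moreover have "take (Suc l) js = js" using len by simp
  ultimately have "f_on (tree_vertices n B i0) (tree_mat B X) (Inl [i0]) (Inl js) =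
      f_on {..<Suc l} (superdiag (chain X js)) 0 l"
    by (simp only: sum.insert_if sum.empty empty_iff finite.emptyI) simp
  also have "\<dots> = nc_coeff (length js - 1) (chain X js)"
    using f_on_superdiag[of "chain X js" l 0 l] len by (simp add: length_chain nc_coeff_def)
  finally show ?thesis .
qed

lemma f_on_tree_fibre:
  assumes i0: "i0 < n" and X: "X \<in> mats n" and k: "k < n"
  shows "(\<Sum>u\<in>{u \<in> tree_vertices n B i0. tree_proj u = k}. f_on (tree_vertices n B i0) (tree_mat B X) (Inl [i0]) u) =
    f n X i0 k"
proof -
  have "(\<Sum>u\<in>{u \<in> tree_vertices n B i0. tree_proj u = k}. f_on (tree_vertices n B i0) (tree_mat B X) (Inl [i0]) u) =
      f_on {..<n} X (tree_proj (Inl [i0])) k"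
  proof (rule f_on_fibration)
    fix u assume "u \<in> tree_vertices n B i0"
    then show "tree_proj u \<in> {..<n}"
      by (auto simp: mem_tree_vertices walks_def dest!: last_in_set)
  next
    fix u v assume "u \<in> tree_vertices n B i0" "v \<in> {..<n}"
    then show "(\<Sum>u'\<in>{u' \<in> tree_vertices n B i0. tree_proj u' = v}. tree_mat B X u u') = X (tree_proj u) v"
      using tree_fibre_sum by simp
  qed (use i0 k singleton_walk[OF i0] in \<open>simp_all add: tree_vertices_finite tree_vertices_nonempty
      mem_tree_vertices lessThan_empty_iff\<close>)
  also have "\<dots> = f n X i0 k"
    using f_on_lessThan[OF _ X i0 k] i0 by simp
  finally show ?thesis .
qed

end

context nc_map_bounded
begin

lemma f_on_tree_copy_vanish:
  assumes i0: "i0 < n" and k: "k < n"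
  shows "f_on (tree_vertices n B i0) (tree_mat B X) (Inl [i0]) (Inr k) = 0"
  unfolding tree_mat_def
proof (rule f_on_graded_vanish[where \<delta> = "tree_level B"])
  fix u v assume "u \<in> tree_vertices n B i0" "v \<in> tree_vertices n B i0"
  then show "tree_copy X u v = 0 \<or> tree_level B u = tree_level B v"
    and "tree_steps B X u v = 0 \<or> tree_level B v = Suc (tree_level B u)"
    by (auto simp: mem_tree_vertices walks_def)
qed (use i0 k singleton_walk[OF i0] in \<open>simp_all add: tree_vertices_finite tree_vertices_nonempty
    mem_tree_vertices\<close>)

lemma nc_expansion:
  assumes n: "n > 0" and X: "X \<in> mats n"
  shows "f n X = (\<lambda>i k. \<Sum>l\<le>B. odot n l X (nc_coeff l) i k)"
proof (intro ext)
  fix i k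
  show "f n X i k = (\<Sum>l\<le>B. odot n l X (nc_coeff l) i k)"
  proof (cases "i < n \<and> k < n")
    case False
    then show ?thesis using f_mats[OF n X] by (auto simp: mats_def odot_def)
  next
    case True
    then have i: "i < n" and k: "k < n" by auto
    let ?F = "f_on (tree_vertices n B i) (tree_mat B X) (Inl [i])"
    let ?S = "{js \<in> walks n B i. last js = k}"
    have "finite ?S" using walks_finite by simp
    have "f n X i k = (\<Sum>u\<in>{u \<in> tree_vertices n B i. tree_proj u = k}. ?F u)"
      using f_on_tree_fibre[OF i X k] by simp
    also have "\<dots> = (\<Sum>js\<in>?S. ?F (Inl js)) + ?F (Inr k)"
      using k by (rule sum_tree_proj_fibre)
    also have "\<dots> = (\<Sum>js\<in>?S. nc_coeff (length js - 1) (chain X js))"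
      using i k by (simp add: f_on_tree_copy_vanish f_on_tree_walk)
    also have "\<dots> = (\<Sum>l\<le>B. \<Sum>js\<in>{js \<in> ?S. length js - 1 = l}. nc_coeff (length js - 1) (chain X js))"
      by (rule sum.group[symmetric, OF \<open>finite ?S\<close>]) (auto simp: walks_def)
    also have "\<dots> = (\<Sum>l\<le>B. odot n l X (nc_coeff l) i k)"
    proof (rule sum.cong[OF refl])
      fix l assume "l \<in> {..B}"
      then have "{js \<in> ?S. length js - 1 = l} =
          {js. length js = Suc l \<and> set js \<subseteq> {..<n} \<and> hd js = i \<and> last js = k}"
        by (auto simp: walks_def)
      then show "(\<Sum>js\<in>{js \<in> ?S. length js - 1 = l}. nc_coeff (length js - 1) (chain X js)) =
          odot n l X (nc_coeff l) i k"
        using i k by (auto simp: odot_def intro!: sum.cong)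
    qed
    finally show ?thesis .
  qed
qed

end

lemma (in vector_space) slice_poly_pad:
  assumes "slice_poly scM scale f n Y Z L c" and "L \<le> B"
  shows "f n (\<lambda>i j. Y i j + scM t (Z i j)) = (\<lambda>i j. \<Sum>k\<le>B. t^k *s (if k \<le> L then c k i j else 0))"
proof -
  have "(\<Sum>k\<le>L. t^k *s c k i j) = (\<Sum>k\<le>B. t^k *s (if k \<le> L then c k i j else 0))" for i j
    by (rule sum.mono_neutral_cong_left) (use assms(2) in auto)
  then show ?thesis using assms(1) by (simp add: slice_poly_def)
qed

theorem theorem6p8:
  fixes scM :: "'k::field \<Rightarrow> 'm::ab_group_add \<Rightarrow> 'm"
    and scN :: "'k \<Rightarrow> 'n::ab_group_add \<Rightarrow> 'n"
    and f :: "nat \<Rightarrow> (nat \<Rightarrow> nat \<Rightarrow> 'm) \<Rightarrow> (nat \<Rightarrow> nat \<Rightarrow> 'n)"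
    and Ldeg :: "nat \<Rightarrow> nat"
  assumes "infinite (UNIV :: 'k set)"
    and "vector_space scM" and "vector_space scN"
    and "nc_function scM scN f"
    and "\<forall>n>0. poly_on_slices_deg scM scN f n (Ldeg n)"
    and "\<exists>B. \<forall>n>0. Ldeg n \<le> B"
  shows "\<exists>L::nat. \<exists>p :: nat \<Rightarrow> 'm list \<Rightarrow> 'n.
           (\<forall>l\<le>L. multilinear scM scN l (p l)) \<and>
           (\<forall>n>0. \<forall>X\<in>mats n. f n X = (\<lambda>i k. \<Sum>l\<le>L. odot n l X (p l) i k))"
proof -
  obtain B where B: "\<forall>n>0. Ldeg n \<le> B" using assms(6) by blast
  have slices: "\<exists>c. \<forall>t. f n (\<lambda>i j. Y i j + scM t (Z i j)) = (\<lambda>i j. \<Sum>k\<le>B. scN (t^k) (c k i j))"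
    if n: "n > 0" and Y: "Y \<in> mats n" and Z: "Z \<in> mats n" for n Y Z
  proof -
    have "poly_on_slices_deg scM scN f n (Ldeg n)" using assms(5) n by simp
    then obtain c where c: "slice_poly scM scN f n Y Z (Ldeg n) c"
      using Y Z unfolding poly_on_slices_deg_def by blast
    show ?thesis
      using vector_space.slice_poly_pad[OF assms(3) c] B n
      by (intro exI[of _ "\<lambda>k i j. if k \<le> Ldeg n then c k i j else 0"]) simp
  qed
  interpret nc_map_bounded scM scN f B
    by (intro nc_map_bounded.intro nc_map.intro nc_map_axioms.intro nc_map_bounded_axioms.intro
        assms(1-4) slices)
  show ?thesis
    using nc_coeff_multilinear nc_expansion by blast
qed

end
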